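(* Let $X$ be a finite set with $|X|=n>1$ and let $G$ be the undirected graph whose vertices are the weak orders on $X$, with $W,W'$ adjacent iff one covers the other in the poset $(\mathbf{WO},\subseteq)$. Then for all weak orders $W,W'$, the shortest-path distance in $G$ between $W$ and $W'$ equals $|J_W\,\Delta\,J_{W'}|$. Consequently $W\mapsto \chi(J_W)\in\{0,1\}^{\mathbf{WO}(2)}$ is an isometric embedding of $G$ into the hypercube graph of dimension $2^n-2$, i.e. $G$ is a partial cube. Equivalently, the family $\mathcal{J}$ is well graded: for any $A,B\in\mathcal{J}$ there is a sequence $A=A_0,A_1,\ldots,A_k=B$ in $\mathcal{J}$ with $k=|A\Delta B|$ and $|A_i\Delta A_{i+1}|=1$ for all $i$.
   Context: A weak order on $X$ is a transitive, strongly complete binary relation on $X$. $\mathbf{WO}(2)$ is the set of weak orders with exactly two indifference classes ($|\mathbf{WO}(2)|=2^n-2$), $J_W=\{U\in\mathbf{WO}(2): W\subseteq U\}$, $\mathcal{J}=\{J_W\}$, and $\chi(J)$ denotes the characteristic vector of $J\subseteq\mathbf{WO}(2)$. $W'$ covers $W$ means $W\subsetneq W'$ with no weak order strictly between them. *)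

theory Defs
  imports Main "HOL-Library.Extended_Nat"
begin

definition weak_order :: "'a set \<Rightarrow> 'a rel \<Rightarrow> bool" where
  "weak_order X W \<longleftrightarrow> W \<subseteq> X \<times> X \<and> trans W \<and>
     (\<forall>x\<in>X. \<forall>y\<in>X. (x, y) \<in> W \<or> (y, x) \<in> W)"

definition WO :: "'a set \<Rightarrow> 'a rel set" where
  "WO X = {W. weak_order X W}"

definition indiff_classes :: "'a set \<Rightarrow> 'a rel \<Rightarrow> 'a set set" where
  "indiff_classes X W = X // (W \<inter> W\<inverse>)"

definition WO2 :: "'a set \<Rightarrow> 'a rel set" where
  "WO2 X = {W \<in> WO X. card (indiff_classes X W) = 2}"

definition J :: "'a set \<Rightarrow> 'a rel \<Rightarrow> 'a rel set" where
  "J X W = {U \<in> WO2 X. W \<subseteq> U}"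

definition symdiff :: "'b set \<Rightarrow> 'b set \<Rightarrow> 'b set" where
  "symdiff A B = (A - B) \<union> (B - A)"

definition covers :: "'a set \<Rightarrow> 'a rel \<Rightarrow> 'a rel \<Rightarrow> bool" where
  "covers X W W' \<longleftrightarrow> W \<in> WO X \<and> W' \<in> WO X \<and> W \<subset> W' \<and>
     \<not> (\<exists>V \<in> WO X. W \<subset> V \<and> V \<subset> W')"

definition adj :: "'a set \<Rightarrow> 'a rel \<Rightarrow> 'a rel \<Rightarrow> bool" where
  "adj X W W' \<longleftrightarrow> covers X W W' \<or> covers X W' W"

definition walk :: "'a set \<Rightarrow> nat \<Rightarrow> 'a rel \<Rightarrow> 'a rel \<Rightarrow> bool" where
  "walk X k W W' \<longleftrightarrow> (\<exists>ws. length ws = Suc k \<and> hd ws = W \<and> last ws = W' \<and>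
     set ws \<subseteq> WO X \<and> (\<forall>i < k. adj X (ws ! i) (ws ! Suc i)))"

text \<open>Shortest-path distance in G (infinity if no path).\<close>
definition gdist :: "'a set \<Rightarrow> 'a rel \<Rightarrow> 'a rel \<Rightarrow> enat" where
  "gdist X W W' = (INF k \<in> {k. walk X k W W'}. enat k)"

definition well_graded :: "'b set set \<Rightarrow> bool" where
  "well_graded F \<longleftrightarrow> (\<forall>A\<in>F. \<forall>B\<in>F. \<exists>as. length as = Suc (card (symdiff A B)) \<and>
     hd as = A \<and> last as = B \<and> set as \<subseteq> F \<and>
     (\<forall>i < card (symdiff A B). card (symdiff (as ! i) (as ! Suc i)) = 1))"

end

theory Submission
  imports Defs
begin

text \<open>
  A weak order W on X is determined by the chain of its proper up-sets (the nonempty proper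
  subsets of X that are closed upwards under W): x is weakly above y in W iff every such up-set
  containing y contains x, and for finite X every chain of nonempty proper subsets arises in this
  way. This is an inclusion-reversing bijection between weak orders and chains, under which
  covering pairs become chains that differ in exactly one member. The weak orders with two
  indifference classes are those whose chain is a singleton {A}, and W is contained in such an
  order iff A is an up-set of W; so J_W is in bijection with the chain of W, uniformly in W.
  Distances in G are therefore distances between chains P, Q under adding or deleting one member
  at a time: each step changes the symmetric difference with Q by one set, and since subfamilies
  of chains are chains, one can walk from P down to P \<inter> Q and then up to Q in |P \<Delta> Q| steps.
\<close>

section \<open>Weak orders as chains of up-sets\<close>

definition nontrivial_subsets :: "'a set \<Rightarrow> 'a set set" where
  "nontrivial_subsets X = {A. A \<subseteq> X \<and> A \<noteq> {} \<and> A \<noteq> X}"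

definition proper_upsets :: "'a set \<Rightarrow> 'a rel \<Rightarrow> 'a set set" where
  "proper_upsets X W = {A \<in> nontrivial_subsets X. \<forall>(x, y) \<in> W. y \<in> A \<longrightarrow> x \<in> A}"

definition chain_order :: "'a set \<Rightarrow> 'a set set \<Rightarrow> 'a rel" where
  "chain_order X C = {(x, y) \<in> X \<times> X. \<forall>A \<in> C. y \<in> A \<longrightarrow> x \<in> A}"

lemma WO_iff:
  "W \<in> WO X \<longleftrightarrow> W \<subseteq> X \<times> X \<and> trans W \<and> (\<forall>x\<in>X. \<forall>y\<in>X. (x, y) \<in> W \<or> (y, x) \<in> W)"
  by (simp add: WO_def weak_order_def)

lemma proper_upsets_chain:
  assumes "W \<in> WO X"
  shows "subset.chain (nontrivial_subsets X) (proper_upsets X W)"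
proof -
  have "A \<subseteq> B \<or> B \<subseteq> A" if "A \<in> proper_upsets X W" "B \<in> proper_upsets X W" for A B
  proof (rule ccontr)
    assume "\<not> (A \<subseteq> B \<or> B \<subseteq> A)"
    then obtain a b where "a \<in> A" "a \<notin> B" "b \<in> B" "b \<notin> A" by blast
    moreover have "a \<in> X" "b \<in> X"
      using that \<open>a \<in> A\<close> \<open>b \<in> B\<close> unfolding proper_upsets_def nontrivial_subsets_def by auto
    ultimately show False
      using that assms unfolding proper_upsets_def WO_iff by fast
  qed
  then show ?thesis
    unfolding subset_chain_def proper_upsets_def by auto
qed

lemma finite_chain:
  assumes "finite X" and "subset.chain (nontrivial_subsets X) C"
  shows "finite C"
  using assms by (auto simp: subset_chain_def nontrivial_subsets_def intro: finite_subset[of _ "Pow X"])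

lemma finite_proper_upsets: "finite X \<Longrightarrow> finite (proper_upsets X W)"
  by (auto simp: proper_upsets_def nontrivial_subsets_def intro: finite_subset[of _ "Pow X"])

lemma chain_order_in_WO:
  assumes "subset.chain S C"
  shows "chain_order X C \<in> WO X"
  using assms unfolding WO_iff chain_order_def subset_chain_def trans_def by blast

lemma chain_order_proper_upsets:
  assumes W: "W \<in> WO X"
  shows "chain_order X (proper_upsets X W) = W"
proof
  show "W \<subseteq> chain_order X (proper_upsets X W)"
  proof (rule subrelI)
    fix x y assume "(x, y) \<in> W"
    then show "(x, y) \<in> chain_order X (proper_upsets X W)"
      using W unfolding chain_order_def proper_upsets_def WO_iff by auto
  qed
  show "chain_order X (proper_upsets X W) \<subseteq> W"
  proof (rule subrelI)
    fix x y assume xy: "(x, y) \<in> chain_order X (proper_upsets X W)"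
    then have "x \<in> X" "y \<in> X" unfolding chain_order_def by auto
    show "(x, y) \<in> W"
    proof (rule ccontr)
      assume "(x, y) \<notin> W"
      define A where "A = {z \<in> X. (z, y) \<in> W}"
      have "(y, y) \<in> W" using W \<open>y \<in> X\<close> unfolding WO_iff by blast
      then have "y \<in> A" "x \<notin> A" using \<open>y \<in> X\<close> \<open>(x, y) \<notin> W\<close> unfolding A_def by auto
      moreover have "u \<in> A" if "(u, v) \<in> W" "v \<in> A" for u v
        using W that unfolding A_def WO_iff trans_def by blast
      ultimately have "A \<in> proper_upsets X W"
        using \<open>x \<in> X\<close> unfolding proper_upsets_def nontrivial_subsets_def A_def by auto
      then show False
        using xy \<open>y \<in> A\<close> \<open>x \<notin> A\<close> unfolding chain_order_def by auto
    qed
  qed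
qed

lemma proper_upsets_chain_order:
  assumes fin: "finite C" and chain: "subset.chain (nontrivial_subsets X) C"
  shows "proper_upsets X (chain_order X C) = C"
proof
  show "C \<subseteq> proper_upsets X (chain_order X C)"
    using chain unfolding proper_upsets_def chain_order_def subset_chain_def by auto
  show "proper_upsets X (chain_order X C) \<subseteq> C"
  proof
    fix S assume S: "S \<in> proper_upsets X (chain_order X C)"
    then have SX: "S \<subseteq> X" "S \<noteq> {}" "S \<noteq> X"
      unfolding proper_upsets_def nontrivial_subsets_def by auto
    have separate: "\<exists>A \<in> C. S \<subseteq> A \<and> z \<notin> A" if z: "z \<in> X" "z \<notin> S" for z
    proof -
      \<comment> \<open>each y in S lies in a member of C avoiding z, so the largest such member contains S\<close>
      define F where "F = {A \<in> C. z \<notin> A}"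
      have cover: "\<exists>A \<in> F. y \<in> A" if y: "y \<in> S" for y
      proof -
        have "(z, y) \<notin> chain_order X C"
          using S z(2) y unfolding proper_upsets_def by auto
        then show ?thesis
          using z(1) y SX(1) unfolding chain_order_def F_def by auto
      qed
      then have "F \<noteq> {}" using SX(2) by blast
      moreover have "subset.chain (nontrivial_subsets X) F"
        using chain unfolding subset_chain_def F_def by blast
      ultimately have "\<Union>F \<in> F"
        using fin by (intro Union_in_chain) (auto simp: F_def)
      moreover have "S \<subseteq> \<Union>F" using cover by blast
      ultimately show ?thesis unfolding F_def by blast
    qed
    define G where "G = {A \<in> C. S \<subseteq> A}"
    obtain z where "z \<in> X" "z \<notin> S" using SX by blast
    then have "G \<noteq> {}" using separate unfolding G_def by blast
    moreover have "subset.chain (nontrivial_subsets X) G"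
      using chain unfolding subset_chain_def G_def by blast
    ultimately have "\<Inter>G \<in> G"
      using fin by (intro Inter_in_chain) (auto simp: G_def)
    moreover have "\<Inter>G \<subseteq> S"
    proof
      fix x assume x: "x \<in> \<Inter>G"
      have "\<Inter>G \<subseteq> X"
        using \<open>\<Inter>G \<in> G\<close> chain unfolding G_def subset_chain_def nontrivial_subsets_def by blast
      then show "x \<in> S"
        using separate x unfolding G_def by blast
    qed
    ultimately show "S \<in> C"
      unfolding G_def by (metis (no_types, lifting) Inf_lower mem_Collect_eq subset_antisym)
  qed
qed

lemma proper_upsets_antimono: "W \<subseteq> V \<Longrightarrow> proper_upsets X V \<subseteq> proper_upsets X W"
  unfolding proper_upsets_def by auto

lemma chain_order_antimono: "C \<subseteq> D \<Longrightarrow> chain_order X D \<subseteq> chain_order X C"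
  unfolding chain_order_def by auto

lemma WO_subset_iff_proper_upsets:
  assumes "W \<in> WO X" and "V \<in> WO X"
  shows "W \<subseteq> V \<longleftrightarrow> proper_upsets X V \<subseteq> proper_upsets X W"
  by (metis assms proper_upsets_antimono chain_order_antimono chain_order_proper_upsets)

lemma WO_psubset_iff_proper_upsets:
  assumes "W \<in> WO X" and "V \<in> WO X"
  shows "W \<subset> V \<longleftrightarrow> proper_upsets X V \<subset> proper_upsets X W"
  using WO_subset_iff_proper_upsets[OF assms] WO_subset_iff_proper_upsets[OF assms(2,1)]
  by auto

section \<open>The cover graph\<close>

lemma no_set_strictly_between_iff_card_Diff:
  assumes "finite Q" and "P \<subset> Q"
  shows "(\<nexists>R. P \<subset> R \<and> R \<subset> Q) \<longleftrightarrow> card (Q - P) = 1"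
proof
  assume nothing_between: "\<nexists>R. P \<subset> R \<and> R \<subset> Q"
  obtain b where b: "b \<in> Q" "b \<notin> P" using assms(2) by blast
  then have "insert b P = Q" using nothing_between assms(2) by blast
  then have "Q - P = {b}" using b by blast
  then show "card (Q - P) = 1" by simp
next
  assume "card (Q - P) = 1"
  then obtain b where "Q - P = {b}" by (auto simp: card_1_singleton_iff)
  then have "Q = insert b P" "b \<notin> P" using assms(2) by auto
  then show "\<nexists>R. P \<subset> R \<and> R \<subset> Q" by (auto simp: psubset_insert_iff)
qed

lemma covers_iff_proper_upsets:
  assumes X: "finite X" and W: "W \<in> WO X" "W' \<in> WO X"
  shows "covers X W W' \<longleftrightarrow>
    proper_upsets X W' \<subset> proper_upsets X W \<and> card (proper_upsets X W - proper_upsets X W') = 1"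
proof -
  let ?P = "proper_upsets X W" and ?Q = "proper_upsets X W'"
  have "(\<exists>V \<in> WO X. W \<subset> V \<and> V \<subset> W') \<longleftrightarrow> (\<exists>R. ?Q \<subset> R \<and> R \<subset> ?P)"
  proof
    assume "\<exists>V \<in> WO X. W \<subset> V \<and> V \<subset> W'"
    then show "\<exists>R. ?Q \<subset> R \<and> R \<subset> ?P"
      using W WO_psubset_iff_proper_upsets by meson
  next
    assume "\<exists>R. ?Q \<subset> R \<and> R \<subset> ?P"
    then obtain R where R: "?Q \<subset> R" "R \<subset> ?P" by blast
    have "subset.chain (nontrivial_subsets X) R"
      using proper_upsets_chain[OF W(1)] R(2) unfolding subset_chain_def by blast
    moreover have "finite R"
      using finite_proper_upsets[OF X] R(2) finite_subset by blast
    ultimately have "chain_order X R \<in> WO X" "proper_upsets X (chain_order X R) = R"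
      using chain_order_in_WO proper_upsets_chain_order by blast+
    then show "\<exists>V \<in> WO X. W \<subset> V \<and> V \<subset> W'"
      using W R WO_psubset_iff_proper_upsets by metis
  qed
  then show ?thesis
    unfolding covers_def using W WO_psubset_iff_proper_upsets finite_proper_upsets[OF X]
      no_set_strictly_between_iff_card_Diff by metis
qed

lemma card_symdiff_eq_1_iff:
  "card (symdiff P Q) = 1 \<longleftrightarrow> (Q \<subset> P \<and> card (P - Q) = 1) \<or> (P \<subset> Q \<and> card (Q - P) = 1)"
proof -
  have "(P - Q) \<inter> (Q - P) = {}" by blast
  then have "(\<exists>x. symdiff P Q = {x}) \<longleftrightarrow>
      (Q \<subset> P \<and> (\<exists>x. P - Q = {x})) \<or> (P \<subset> Q \<and> (\<exists>x. Q - P = {x}))"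
    unfolding symdiff_def Un_singleton_iff by auto
  then show ?thesis unfolding One_nat_def card_1_singleton_iff .
qed

lemma adj_iff_card_symdiff_proper_upsets:
  assumes "finite X" and "W \<in> WO X" "W' \<in> WO X"
  shows "adj X W W' \<longleftrightarrow> card (symdiff (proper_upsets X W) (proper_upsets X W')) = 1"
  unfolding adj_def card_symdiff_eq_1_iff covers_iff_proper_upsets[OF assms]
    covers_iff_proper_upsets[OF assms(1,3,2)] by blast

lemma adj_sym: "adj X A B \<Longrightarrow> adj X B A"
  unfolding adj_def by blast

lemma adj_in_WO: "adj X A B \<Longrightarrow> A \<in> WO X \<and> B \<in> WO X"
  unfolding adj_def covers_def by blast

lemma walk_0_iff: "walk X 0 A B \<longleftrightarrow> A \<in> WO X \<and> B = A"
  unfolding walk_def by (auto simp: length_Suc_conv)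

lemma walk_Suc_iff: "walk X (Suc k) A C \<longleftrightarrow> A \<in> WO X \<and> (\<exists>B. adj X A B \<and> walk X k B C)"
proof
  assume "walk X (Suc k) A C"
  then obtain ws where ws: "length ws = Suc (Suc k)" "hd ws = A" "last ws = C" "set ws \<subseteq> WO X"
    "\<forall>i < Suc k. adj X (ws ! i) (ws ! Suc i)"
    unfolding walk_def by blast
  then obtain vs where vs: "ws = A # vs" "length vs = Suc k"
    by (cases ws) auto
  then have "vs \<noteq> []" by auto
  have "adj X A (hd vs)"
    using ws(5)[rule_format, of 0] vs \<open>vs \<noteq> []\<close> by (simp add: hd_conv_nth)
  moreover have "walk X k (hd vs) C"
    unfolding walk_def using ws vs \<open>vs \<noteq> []\<close> by (intro exI[of _ vs]) auto
  ultimately show "A \<in> WO X \<and> (\<exists>B. adj X A B \<and> walk X k B C)"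
    using ws(4) vs(1) by auto
next
  assume "A \<in> WO X \<and> (\<exists>B. adj X A B \<and> walk X k B C)"
  then obtain B vs where A: "A \<in> WO X" "adj X A B" and vs: "length vs = Suc k" "hd vs = B"
    "last vs = C" "set vs \<subseteq> WO X" "\<forall>i < k. adj X (vs ! i) (vs ! Suc i)"
    unfolding walk_def by blast
  have "vs \<noteq> []" using vs(1) by auto
  have "adj X ((A # vs) ! i) ((A # vs) ! Suc i)" if "i < Suc k" for i
    using that A vs \<open>vs \<noteq> []\<close> by (cases i) (auto simp: hd_conv_nth)
  then show "walk X (Suc k) A C"
    unfolding walk_def using A vs by (intro exI[of _ "A # vs"]) auto
qed

lemma walk_append: "walk X k A B \<Longrightarrow> walk X m B C \<Longrightarrow> walk X (k + m) A C"
  by (induction k arbitrary: A) (auto simp: walk_0_iff walk_Suc_iff)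

lemma walk_sym: "walk X k A B \<Longrightarrow> walk X k B A"
proof (induction k arbitrary: A)
  case 0
  then show ?case by (simp add: walk_0_iff)
next
  case (Suc k)
  then obtain V where "adj X A V" "walk X k V B"
    by (auto simp: walk_Suc_iff)
  then have "walk X 1 V A"
    using adj_sym adj_in_WO by (fastforce simp: walk_Suc_iff walk_0_iff)
  then show ?case
    using Suc.IH[OF \<open>walk X k V B\<close>] walk_append by fastforce
qed

lemma card_symdiff_triangle:
  assumes "finite (symdiff A B)" and "finite (symdiff B C)"
  shows "card (symdiff A C) \<le> card (symdiff A B) + card (symdiff B C)"
proof -
  have "card (symdiff A C) \<le> card (symdiff A B \<union> symdiff B C)"
    using assms by (intro card_mono) (auto simp: symdiff_def)
  also have "\<dots> \<le> card (symdiff A B) + card (symdiff B C)"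
    by (rule card_Un_le)
  finally show ?thesis .
qed

lemma card_symdiff_proper_upsets_le_walk:
  assumes X: "finite X" and "walk X k W W'"
  shows "card (symdiff (proper_upsets X W) (proper_upsets X W')) \<le> k"
  using assms(2)
proof (induction k arbitrary: W)
  case 0
  then show ?case by (simp add: walk_0_iff symdiff_def)
next
  case (Suc k)
  then obtain V where W: "W \<in> WO X" and V: "adj X W V" "walk X k V W'"
    by (auto simp: walk_Suc_iff)
  let ?U = "proper_upsets X"
  have step: "card (symdiff (?U W) (?U V)) = 1"
    using adj_iff_card_symdiff_proper_upsets[OF X W] V adj_in_WO by blast
  have "card (symdiff (?U W) (?U W')) \<le> card (symdiff (?U W) (?U V)) + card (symdiff (?U V) (?U W'))"
    using finite_proper_upsets[OF X] by (intro card_symdiff_triangle) (auto simp: symdiff_def)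
  also have "\<dots> \<le> Suc k"
    using step Suc.IH[OF V(2)] by simp
  finally show ?case .
qed

lemma walk_chain_order_Diff:
  assumes X: "finite X" and D: "subset.chain (nontrivial_subsets X) D" and "C \<subseteq> D"
  shows "walk X (card (D - C)) (chain_order X D) (chain_order X C)"
  using D \<open>C \<subseteq> D\<close>
proof (induction "card (D - C)" arbitrary: D)
  case 0
  then have "D = C"
    using finite_chain[OF X] by auto
  then show ?case
    using chain_order_in_WO[OF "0.prems"(1)] by (simp add: walk_0_iff)
next
  case (Suc n)
  then have "D - C \<noteq> {}" by auto
  then obtain B where B: "B \<in> D" "B \<notin> C" by blast
  let ?D' = "D - {B}"
  have chain': "subset.chain (nontrivial_subsets X) ?D'"
    using Suc.prems(1) unfolding subset_chain_def by blast
  have "?D' - C = (D - C) - {B}" by blast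
  then have "card (?D' - C) = n"
    using Suc.hyps(2) B by simp
  then have "walk X n (chain_order X ?D') (chain_order X C)"
    using Suc.hyps(1)[of ?D'] chain' Suc.prems(2) B by blast
  moreover have "adj X (chain_order X D) (chain_order X ?D')"
  proof -
    have "proper_upsets X (chain_order X D) = D" "proper_upsets X (chain_order X ?D') = ?D'"
      using proper_upsets_chain_order finite_chain[OF X] Suc.prems(1) chain' by blast+
    moreover have "symdiff D ?D' = {B}"
      using B unfolding symdiff_def by blast
    moreover note adj_iff_card_symdiff_proper_upsets[OF X
        chain_order_in_WO[OF Suc.prems(1)] chain_order_in_WO[OF chain']]
    ultimately show ?thesis
      by simp
  qed
  ultimately show ?case
    using chain_order_in_WO[OF Suc.prems(1)] Suc.hyps(2)[symmetric] by (auto simp: walk_Suc_iff)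
qed

lemma walk_proper_upsets_symdiff:
  assumes X: "finite X" and W: "W \<in> WO X" "W' \<in> WO X"
  shows "walk X (card (symdiff (proper_upsets X W) (proper_upsets X W'))) W W'"
proof -
  let ?P = "proper_upsets X W" and ?Q = "proper_upsets X W'"
  have "walk X (card (?P - ?P \<inter> ?Q)) (chain_order X ?P) (chain_order X (?P \<inter> ?Q))"
    by (rule walk_chain_order_Diff[OF X proper_upsets_chain[OF W(1)]]) blast
  moreover have "walk X (card (?Q - ?P \<inter> ?Q)) (chain_order X ?Q) (chain_order X (?P \<inter> ?Q))"
    by (rule walk_chain_order_Diff[OF X proper_upsets_chain[OF W(2)]]) blast
  moreover have "?P - ?P \<inter> ?Q = ?P - ?Q" "?Q - ?P \<inter> ?Q = ?Q - ?P" by blast+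
  ultimately have "walk X (card (?P - ?Q)) W (chain_order X (?P \<inter> ?Q))"
    "walk X (card (?Q - ?P)) (chain_order X (?P \<inter> ?Q)) W'"
    by (simp_all add: chain_order_proper_upsets W walk_sym)
  then have "walk X (card (?P - ?Q) + card (?Q - ?P)) W W'"
    by (rule walk_append)
  moreover have "card (symdiff ?P ?Q) = card (?P - ?Q) + card (?Q - ?P)"
    unfolding symdiff_def using finite_proper_upsets[OF X]
    by (intro card_Un_disjoint) auto
  ultimately show ?thesis by simp
qed

lemma gdist_eq_card_symdiff_proper_upsets:
  assumes X: "finite X" and W: "W \<in> WO X" "W' \<in> WO X"
  shows "gdist X W W' = enat (card (symdiff (proper_upsets X W) (proper_upsets X W')))"
  unfolding gdist_def
proof (rule antisym)
  let ?d = "card (symdiff (proper_upsets X W) (proper_upsets X W'))"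
  show "(INF k \<in> {k. walk X k W W'}. enat k) \<le> enat ?d"
    using walk_proper_upsets_symdiff[OF assms] by (auto intro: INF_lower)
  show "enat ?d \<le> (INF k \<in> {k. walk X k W W'}. enat k)"
    using card_symdiff_proper_upsets_le_walk[OF X] by (auto intro!: INF_greatest)
qed

section \<open>Weak orders with two indifference classes\<close>

lemma indifference_chain_order:
  "chain_order X C \<inter> (chain_order X C)\<inverse> = {(x, y) \<in> X \<times> X. \<forall>A \<in> C. x \<in> A \<longleftrightarrow> y \<in> A}"
  unfolding chain_order_def by auto

lemma indiff_classes_chain_order_empty: "card (indiff_classes X (chain_order X {})) \<le> 1"
proof -
  have "indiff_classes X (chain_order X {}) \<subseteq> {X}"
    unfolding indiff_classes_def indifference_chain_order by (auto simp: quotient_def)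
  then show ?thesis
    using card_mono[of "{X}"] by fastforce
qed

lemma indiff_classes_chain_order_singleton:
  assumes "A \<in> nontrivial_subsets X"
  shows "indiff_classes X (chain_order X {A}) = {A, X - A}"
proof -
  let ?r = "chain_order X {A} \<inter> (chain_order X {A})\<inverse>"
  have "?r `` {x} = (if x \<in> A then A else X - A)" if "x \<in> X" for x
    using that assms unfolding indifference_chain_order nontrivial_subsets_def by auto
  then have "indiff_classes X (chain_order X {A}) = (\<lambda>x. if x \<in> A then A else X - A) ` X"
    unfolding indiff_classes_def quotient_def by auto
  also have "\<dots> = {A, X - A}"
    using assms unfolding nontrivial_subsets_def by auto
  finally show ?thesis .
qed

lemma three_le_card_indiff_classes_chain_order:
  assumes X: "finite X" and C: "C \<subseteq> nontrivial_subsets X" and AB: "A \<in> C" "B \<in> C" "A \<subset> B"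
  shows "3 \<le> card (indiff_classes X (chain_order X C))"
proof -
  let ?r = "chain_order X C \<inter> (chain_order X C)\<inverse>"
  let ?K = "\<lambda>x. ?r `` {x}"
  have nontrivial: "A \<in> nontrivial_subsets X" "B \<in> nontrivial_subsets X"
    using C AB by blast+
  obtain a where "a \<in> A"
    using nontrivial(1) unfolding nontrivial_subsets_def by blast
  obtain b where "b \<in> B" "b \<notin> A"
    using AB(3) by blast
  obtain c where "c \<in> X" "c \<notin> B"
    using nontrivial(2) unfolding nontrivial_subsets_def by blast
  have "a \<in> X" "b \<in> X"
    using nontrivial \<open>a \<in> A\<close> \<open>b \<in> B\<close> unfolding nontrivial_subsets_def by blast+
  have own: "x \<in> ?K x" if "x \<in> X" for x
    using that by (simp add: indifference_chain_order)
  have "a \<notin> ?K b" "a \<notin> ?K c" "b \<notin> ?K c"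
    using \<open>a \<in> A\<close> \<open>b \<notin> A\<close> \<open>b \<in> B\<close> \<open>c \<notin> B\<close> AB by (auto simp: indifference_chain_order)
  then have "?K a \<noteq> ?K b" "?K a \<noteq> ?K c" "?K b \<noteq> ?K c"
    using own \<open>a \<in> X\<close> \<open>b \<in> X\<close> by blast+
  then have "card {?K a, ?K b, ?K c} = 3"
    by simp
  moreover have "{?K a, ?K b, ?K c} \<subseteq> indiff_classes X (chain_order X C)"
    unfolding indiff_classes_def using \<open>a \<in> X\<close> \<open>b \<in> X\<close> \<open>c \<in> X\<close> by (auto intro: quotientI)
  moreover have "finite (indiff_classes X (chain_order X C))"
    unfolding indiff_classes_def using X by (rule finite_quotient) (auto simp: chain_order_def)
  ultimately show ?thesis
    by (metis card_mono)
qed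

lemma proper_upsets_chain_order_singleton:
  "A \<in> nontrivial_subsets X \<Longrightarrow> proper_upsets X (chain_order X {A}) = {A}"
  by (rule proper_upsets_chain_order) (auto simp: subset_chain_def)

lemma inj_on_chain_order_singleton: "inj_on (\<lambda>A. chain_order X {A}) (nontrivial_subsets X)"
  by (rule inj_onI) (metis proper_upsets_chain_order_singleton singleton_inject)

lemma WO2_iff_proper_upsets_singleton:
  assumes X: "finite X"
  shows "U \<in> WO2 X \<longleftrightarrow> U \<in> WO X \<and> (\<exists>A. proper_upsets X U = {A})"
proof
  assume "U \<in> WO2 X"
  then have U: "U \<in> WO X" and two: "card (indiff_classes X U) = 2"
    unfolding WO2_def by auto
  let ?C = "proper_upsets X U"
  have U_eq: "chain_order X ?C = U"
    using chain_order_proper_upsets[OF U] .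
  have chain: "subset.chain (nontrivial_subsets X) ?C"
    using proper_upsets_chain[OF U] .
  have "?C \<noteq> {}"
  proof
    assume "?C = {}"
    then have "card (indiff_classes X U) \<le> 1"
      using indiff_classes_chain_order_empty[of X] U_eq by simp
    then show False using two by simp
  qed
  moreover have "A = B" if "A \<in> ?C" "B \<in> ?C" for A B
  proof (rule ccontr)
    assume "A \<noteq> B"
    have "?C \<subseteq> nontrivial_subsets X"
      using chain unfolding subset_chain_def by blast
    moreover have "A \<subset> B \<or> B \<subset> A"
      using chain that \<open>A \<noteq> B\<close> unfolding subset_chain_def by blast
    ultimately have "3 \<le> card (indiff_classes X (chain_order X ?C))"
      using three_le_card_indiff_classes_chain_order[OF X _ that]
        three_le_card_indiff_classes_chain_order[OF X _ that(2,1)] by blast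
    then have "3 \<le> card (indiff_classes X U)"
      using U_eq by simp
    then show False using two by simp
  qed
  ultimately show "U \<in> WO X \<and> (\<exists>A. ?C = {A})"
    using U by blast
next
  assume "U \<in> WO X \<and> (\<exists>A. proper_upsets X U = {A})"
  then obtain A where U: "U \<in> WO X" and A: "proper_upsets X U = {A}"
    by blast
  have "U = chain_order X {A}"
    using chain_order_proper_upsets[OF U] A by simp
  moreover have "A \<in> nontrivial_subsets X"
    using A unfolding proper_upsets_def by blast
  moreover have "A \<noteq> X - A"
    using \<open>A \<in> nontrivial_subsets X\<close> unfolding nontrivial_subsets_def by blast
  ultimately show "U \<in> WO2 X"
    using U unfolding WO2_def WO_def by (simp add: indiff_classes_chain_order_singleton)
qed

lemma J_eq_image_proper_upsets:
  assumes X: "finite X" and W: "W \<in> WO X"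
  shows "J X W = (\<lambda>A. chain_order X {A}) ` proper_upsets X W"
proof (intro equalityI subsetI)
  fix U assume "U \<in> J X W"
  then obtain A where U: "U \<in> WO X" "W \<subseteq> U" and A: "proper_upsets X U = {A}"
    unfolding J_def WO2_iff_proper_upsets_singleton[OF X] by blast
  then have "U = chain_order X {A}"
    using chain_order_proper_upsets[OF U(1)] by simp
  moreover have "A \<in> proper_upsets X W"
    using U A WO_subset_iff_proper_upsets[OF W U(1)] by blast
  ultimately show "U \<in> (\<lambda>A. chain_order X {A}) ` proper_upsets X W"
    by blast
next
  fix U assume "U \<in> (\<lambda>A. chain_order X {A}) ` proper_upsets X W"
  then obtain A where A: "A \<in> proper_upsets X W" and U: "U = chain_order X {A}"
    by blast
  then have "A \<in> nontrivial_subsets X"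
    unfolding proper_upsets_def by blast
  then have "U \<in> WO X" "proper_upsets X U = {A}"
    using U chain_order_in_WO[of "nontrivial_subsets X" "{A}"] proper_upsets_chain_order_singleton
    by (simp_all add: subset_chain_def)
  moreover have "W \<subseteq> U"
    using WO_subset_iff_proper_upsets[OF W \<open>U \<in> WO X\<close>] A \<open>proper_upsets X U = {A}\<close> by simp
  ultimately show "U \<in> J X W"
    unfolding J_def WO2_iff_proper_upsets_singleton[OF X] by blast
qed

lemma symdiff_image:
  assumes "inj_on f (A \<union> B)"
  shows "symdiff (f ` A) (f ` B) = f ` symdiff A B"
  using assms unfolding symdiff_def inj_on_def by blast

lemma card_symdiff_J:
  assumes X: "finite X" and W: "W \<in> WO X" "W' \<in> WO X"
  shows "card (symdiff (J X W) (J X W')) = card (symdiff (proper_upsets X W) (proper_upsets X W'))"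
proof -
  let ?P = "proper_upsets X W" and ?Q = "proper_upsets X W'"
  have "?P \<union> ?Q \<subseteq> nontrivial_subsets X"
    unfolding proper_upsets_def by blast
  then have "inj_on (\<lambda>A. chain_order X {A}) (?P \<union> ?Q)"
    by (rule inj_on_subset[OF inj_on_chain_order_singleton])
  then have "symdiff (J X W) (J X W') = (\<lambda>A. chain_order X {A}) ` symdiff ?P ?Q"
    and "inj_on (\<lambda>A. chain_order X {A}) (symdiff ?P ?Q)"
    unfolding J_eq_image_proper_upsets[OF X W(1)] J_eq_image_proper_upsets[OF X W(2)]
    by (simp_all add: symdiff_image) (rule inj_on_subset, auto simp: symdiff_def)
  then show ?thesis
    by (simp add: card_image)
qed

lemma adj_iff_card_symdiff_J:
  assumes "finite X" and "W \<in> WO X" "W' \<in> WO X"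
  shows "adj X W W' \<longleftrightarrow> card (symdiff (J X W) (J X W')) = 1"
  using adj_iff_card_symdiff_proper_upsets[OF assms] card_symdiff_J[OF assms] by simp

lemma well_graded_J:
  assumes X: "finite X"
  shows "well_graded (J X ` WO X)"
  unfolding well_graded_def
proof (intro ballI)
  fix A B assume "A \<in> J X ` WO X" "B \<in> J X ` WO X"
  then obtain W W' where W: "W \<in> WO X" "W' \<in> WO X" and AB: "A = J X W" "B = J X W'"
    by blast
  let ?d = "card (symdiff A B)"
  have "walk X ?d W W'"
    using walk_proper_upsets_symdiff[OF X W] card_symdiff_J[OF X W] AB by simp
  then obtain ws where ws: "length ws = Suc ?d" "hd ws = W" "last ws = W'" "set ws \<subseteq> WO X"
    "\<forall>i < ?d. adj X (ws ! i) (ws ! Suc i)"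
    unfolding walk_def by blast
  have "card (symdiff (map (J X) ws ! i) (map (J X) ws ! Suc i)) = 1" if "i < ?d" for i
    using ws that adj_iff_card_symdiff_J[OF X] nth_mem by (simp add: subset_iff)
  moreover have "ws \<noteq> []" using ws(1) by auto
  ultimately show "\<exists>as. length as = Suc ?d \<and> hd as = A \<and> last as = B \<and> set as \<subseteq> J X ` WO X \<and>
      (\<forall>i < ?d. card (symdiff (as ! i) (as ! Suc i)) = 1)"
    using ws AB by (intro exI[of _ "map (J X) ws"]) (auto simp: hd_map last_map)
qed

theorem mainTheorem7:
  fixes X :: "'a set"
  assumes "finite X" and "card X > 1"
  shows "(\<forall>W \<in> WO X. \<forall>W' \<in> WO X. gdist X W W' = enat (card (symdiff (J X W) (J X W'))))
     \<and> well_graded (J X ` WO X)"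
  using gdist_eq_card_symdiff_proper_upsets[OF assms(1)] card_symdiff_J[OF assms(1)]
    well_graded_J[OF assms(1)] by simp

end
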